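(* Fix $0<p<1$ and $\lambda>0$, and for each $n$ let $\Delta=\Delta(n)=\frac{-\ln\left(1-\sqrt[n]{p}\right)}{\lambda}$. Then the expected response time of the protocol $\mathrm{PA\text{-}CORE}(\Delta)$ satisfies $\mathbb{E}[RT]\in O\!\left(\frac{\sqrt n\,\log n}{\lambda}\right)$ as $n\to\infty$; in particular it is sub-linear in $n$.
   Context: Setting: a supervisor $i_0$ and $n+1$ worker agents $i_1,\ldots,i_{n+1}$, connected by a complete reliable network; each message's delay is an independent exponential random variable with parameter $\lambda$. There is no global clock: each agent $i_k$ has a local clock $C_{i_k}(t)$ that measures elapsed time accurately but may be offset by an unknown constant; $C_{i_0}(t)=t$, and $i_0$ receives an external input at time $t=0$. Let $\delta=\frac{\ln n}{\lambda\sqrt n}$. Protocol $\mathrm{PA\text{-}CORE}(\Delta)$: at time $0$, $i_0$ sends "trigger" to all workers. Upon receiving "trigger", a worker sends "redirect" to each of the other $n$ workers. Each worker $i_k$ records its local clock readings $\tau_1,\ldots,\tau_n$ at the arrivals of the $n$ "redirect" messages it receives; upon the $n$-th one it computes $T=\frac1n\sum_{m=1}^n\tau_m-\frac{2}{\lambda}$, defines the adjusted clock $C^{Adj}_{i_k}(t)=C_{i_k}(t)-T$, waits until $C^{Adj}_{i_k}(t)\ge \Delta+2\delta(k-1)$ (not waiting if this already holds), and performs its action $\alpha_k$. With $t_k$ the (real) time at which $i_k$ performs $\alpha_k$, the response time is $RT=\max_k t_k$. *)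

theory Defs
  imports "HOL-Probability.Probability"
begin

text \<open>Messages: (0,j) is the trigger from the supervisor to worker j;
  (j,k) with j,k \<ge> 1, j \<noteq> k is the redirect from worker j to worker k.
  Workers are indexed 1..n+1.\<close>
definition msg_index :: "nat \<Rightarrow> (nat \<times> nat) set" where
  "msg_index n = {(i, j). i \<le> n + 1 \<and> 1 \<le> j \<and> j \<le> n + 1 \<and> i \<noteq> j}"

definition delay_space :: "real \<Rightarrow> nat \<Rightarrow> ((nat \<times> nat) \<Rightarrow> real) measure" where
  "delay_space l n = PiM (msg_index n) (\<lambda>_. density lborel (exponential_density l))"

definition small_delta :: "real \<Rightarrow> nat \<Rightarrow> real" where
  "small_delta l n = ln (real n) / (l * sqrt (real n))"

definition arrival :: "((nat \<times> nat) \<Rightarrow> real) \<Rightarrow> nat \<Rightarrow> nat \<Rightarrow> real" where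
  "arrival \<omega> j k = \<omega> (0, j) + \<omega> (j, k)"

text \<open>Local clock offsets cancel: the adjusted clock equals
  t - (mean of arrival times) + 2/l, and the worker acts at the later of the
  n-th redirect arrival and the moment the adjusted clock reaches
  Delta + 2 delta (k-1).\<close>
definition action_time :: "real \<Rightarrow> real \<Rightarrow> nat \<Rightarrow> ((nat \<times> nat) \<Rightarrow> real) \<Rightarrow> nat \<Rightarrow> real" where
  "action_time l D n \<omega> k =
     max (Max {arrival \<omega> j k | j. j \<in> {1..n+1} \<and> j \<noteq> k})
         ((\<Sum>j\<in>{1..n+1} - {k}. arrival \<omega> j k) / real n - 2 / l
           + D + 2 * small_delta l n * (real k - 1))"

definition response_time :: "real \<Rightarrow> real \<Rightarrow> nat \<Rightarrow> ((nat \<times> nat) \<Rightarrow> real) \<Rightarrow> real" where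
  "response_time l D n \<omega> = Max (action_time l D n \<omega> ` {1..n+1})"

definition Delta_p :: "real \<Rightarrow> real \<Rightarrow> nat \<Rightarrow> real" where
  "Delta_p p l n = - ln (1 - root n p) / l"

end

theory Submission
  imports Defs "HOL-Real_Asymp.Real_Asymp"
begin

text \<open>Every arrival time is the sum of two delays, and a single delay x satisfies
  x \<le> t + x^6 / t^5 for every t > 0. Hence the response time is at most
  2t + \<Delta> + 2\<delta>n + \<Sum> \<omega>(i)^6 / t^5, the sum ranging over the O(n^2) messages,
  and taking expectations gives E[RT] \<le> 2t + \<Delta> + 2\<delta>n + O(n^2) 6! / (\<lambda>^6 t^5).
  With t = \<surd>n / \<lambda> the moment term is O(1 / (\<lambda> \<surd>n)), while 2\<delta>n = 2 \<surd>n ln n / \<lambda>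
  and \<lambda>\<Delta> = -ln (1 - p^(1/n)) = ln n + O(1).\<close>

lemma zero_le_power_Suc_odd:
  fixes x :: "'a::linordered_idom"
  shows "odd m \<Longrightarrow> 0 \<le> x ^ Suc m"
  by (simp add: zero_le_even_power del: power_Suc)

lemma le_add_power_div:
  fixes x t :: real
  assumes "0 < t" and "odd m"
  shows "x \<le> t + x ^ Suc m / t ^ m"
proof (cases "x \<le> t")
  case True
  moreover have "0 \<le> x ^ Suc m / t ^ m"
    using assms by (intro divide_nonneg_pos zero_le_power_Suc_odd) auto
  ultimately show ?thesis by linarith
next
  case False
  then have "1 \<le> (x / t) ^ m"
    using assms by (simp add: one_le_power)
  then have "x * 1 \<le> x * (x / t) ^ m"
    using False assms by (intro mult_left_mono) auto
  also have "\<dots> = x ^ Suc m / t ^ m"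
    by (simp add: power_divide)
  finally show ?thesis using assms by simp
qed

lemma nn_integral_exponential_power:
  assumes "0 < l"
  shows "(\<integral>\<^sup>+x. ennreal (x ^ k) \<partial>density lborel (exponential_density l)) = ennreal (fact k / l ^ k)"
proof -
  have "(\<integral>\<^sup>+x. ennreal (x ^ k) \<partial>density lborel (exponential_density l))
      = (\<integral>\<^sup>+x. ennreal (exponential_density l x * x ^ k) \<partial>lborel)"
    using assms
    by (subst nn_integral_density) (auto intro!: nn_integral_cong simp: ennreal_mult')
  also have "\<dots> = ennreal (fact k / l ^ k)"
    using nn_integral_erlang_ith_moment[OF assms, of 0 k] by simp
  finally show ?thesis .
qed

lemma nn_integral_PiM_component:
  fixes f :: "'b \<Rightarrow> ennreal"
  assumes "\<And>i. i \<in> I \<Longrightarrow> prob_space (M i)" and "i \<in> I" and "f \<in> borel_measurable (M i)"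
  shows "(\<integral>\<^sup>+\<omega>. f (\<omega> i) \<partial>PiM I M) = (\<integral>\<^sup>+x. f x \<partial>M i)"
proof -
  have "(\<integral>\<^sup>+\<omega>. f (\<omega> i) \<partial>PiM I M) = (\<integral>\<^sup>+x. f x \<partial>distr (PiM I M) (M i) (\<lambda>\<omega>. \<omega> i))"
    using assms by (subst nn_integral_distr) auto
  also have "distr (PiM I M) (M i) (\<lambda>\<omega>. \<omega> i) = M i"
    by (rule distr_PiM_component[OF assms(1,2)])
  finally show ?thesis .
qed

lemma finite_msg_index: "finite (msg_index n)"
  by (rule finite_subset[of _ "{0..n+1} \<times> {0..n+1}"]) (auto simp: msg_index_def)

lemma card_msg_index_le: "card (msg_index n) \<le> (n + 2)\<^sup>2"
proof -
  have "card (msg_index n) \<le> card ({0..n+1} \<times> {0..n+1})"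
    by (rule card_mono) (auto simp: msg_index_def)
  then show ?thesis by (simp add: power2_eq_square)
qed

lemma prob_space_delay_space: "0 < l \<Longrightarrow> prob_space (delay_space l n)"
  unfolding delay_space_def by (intro prob_space_PiM prob_space_exponential_density)

lemma measurable_delay_space_component [measurable]:
  "i \<in> msg_index n \<Longrightarrow> (\<lambda>\<omega>. \<omega> i) \<in> borel_measurable (delay_space l n)"
  unfolding delay_space_def
  by (subst measurable_cong_sets[OF refl, of _ "density lborel (exponential_density l)"])
    (simp_all add: measurable_component_singleton)

lemma nn_integral_delay_power:
  assumes "0 < l" and "0 < c" and "i \<in> msg_index n"
  shows "(\<integral>\<^sup>+\<omega>. ennreal (\<omega> i ^ k / c) \<partial>delay_space l n) = ennreal (fact k / (l ^ k * c))"
proof -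
  have "(\<integral>\<^sup>+\<omega>. ennreal (\<omega> i ^ k / c) \<partial>delay_space l n)
      = (\<integral>\<^sup>+\<omega>. ennreal (1 / c) * ennreal (\<omega> i ^ k) \<partial>delay_space l n)"
    using assms(2) by (intro nn_integral_cong) (simp flip: ennreal_mult')
  also have "\<dots> = ennreal (1 / c) * (\<integral>\<^sup>+\<omega>. ennreal (\<omega> i ^ k) \<partial>delay_space l n)"
    using assms(3) by (intro nn_integral_cmult) measurable
  also have "(\<integral>\<^sup>+\<omega>. ennreal (\<omega> i ^ k) \<partial>delay_space l n)
      = (\<integral>\<^sup>+x. ennreal (x ^ k) \<partial>density lborel (exponential_density l))"
    unfolding delay_space_def using assms prob_space_exponential_density
    by (intro nn_integral_PiM_component) auto
  also have "\<dots> = ennreal (fact k / l ^ k)"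
    using assms(1) by (rule nn_integral_exponential_power)
  also have "ennreal (1 / c) * ennreal (fact k / l ^ k) = ennreal (fact k / (l ^ k * c))"
    using assms(2) by (simp add: mult.commute flip: ennreal_mult')
  finally show ?thesis .
qed

lemma small_delta_nonneg: "0 < l \<Longrightarrow> 0 \<le> small_delta l n"
  by (cases "n = 0") (simp_all add: small_delta_def)

lemma response_time_le:
  assumes "0 < l" and "1 \<le> n" and "0 \<le> D"
    and arrival_le: "\<And>j k. j \<in> {1..n+1} \<Longrightarrow> k \<in> {1..n+1} \<Longrightarrow> j \<noteq> k \<Longrightarrow> arrival \<omega> j k \<le> B"
  shows "response_time l D n \<omega> \<le> B + D + 2 * small_delta l n * real n"
proof -
  have \<delta>: "0 \<le> small_delta l n"
    using assms(1) by (rule small_delta_nonneg)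
  have "action_time l D n \<omega> k \<le> B + D + 2 * small_delta l n * real n" if k: "k \<in> {1..n+1}" for k
  proof -
    have "card ({1..n+1} - {k}) = n"
      using k by simp
    then have "{1..n+1} - {k} \<noteq> {}"
      using assms(2) by (metis card.empty not_one_le_zero)
    moreover have "{arrival \<omega> j k | j. j \<in> {1..n+1} \<and> j \<noteq> k} = (\<lambda>j. arrival \<omega> j k) ` ({1..n+1} - {k})"
      by blast
    ultimately have "Max {arrival \<omega> j k | j. j \<in> {1..n+1} \<and> j \<noteq> k} \<le> B"
      using arrival_le k by (simp add: Max_le_iff)
    moreover have "(\<Sum>j\<in>{1..n+1} - {k}. arrival \<omega> j k) \<le> real n * B"
      using sum_bounded_above[of "{1..n+1} - {k}" "\<lambda>j. arrival \<omega> j k" B] arrival_le k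
        \<open>card ({1..n+1} - {k}) = n\<close> by auto
    then have "(\<Sum>j\<in>{1..n+1} - {k}. arrival \<omega> j k) / real n \<le> B"
      using assms by (simp add: divide_le_eq mult.commute)
    moreover have "2 * small_delta l n * (real k - 1) \<le> 2 * small_delta l n * real n"
      using k \<delta> by (intro mult_left_mono) auto
    moreover have "0 \<le> 2 / l" and "0 \<le> 2 * small_delta l n * real n"
      using assms \<delta> by simp_all
    ultimately show ?thesis
      unfolding action_time_def using assms(3) by (intro max.boundedI) linarith+
  qed
  then show ?thesis
    unfolding response_time_def by (subst Max_le_iff) auto
qed

lemma arrival_le_moment_sum:
  fixes t :: real
  assumes "0 < t" and "odd m" and "j \<in> {1..n+1}" and "k \<in> {1..n+1}" and "j \<noteq> k"
  shows "arrival \<omega> j k \<le> 2 * t + (\<Sum>i\<in>msg_index n. \<omega> i ^ Suc m / t ^ m)"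
proof -
  have msgs: "{(0, j), (j, k)} \<subseteq> msg_index n" and "(0, j) \<noteq> (j, k)"
    using assms by (auto simp: msg_index_def)
  have "0 \<le> \<omega> i ^ Suc m / t ^ m" for i
    using assms by (intro divide_nonneg_pos zero_le_power_Suc_odd) auto
  then have "(\<Sum>i\<in>{(0, j), (j, k)}. \<omega> i ^ Suc m / t ^ m) \<le> (\<Sum>i\<in>msg_index n. \<omega> i ^ Suc m / t ^ m)"
    by (intro sum_mono2[OF finite_msg_index msgs])
  then have "\<omega> (0, j) ^ Suc m / t ^ m + \<omega> (j, k) ^ Suc m / t ^ m
      \<le> (\<Sum>i\<in>msg_index n. \<omega> i ^ Suc m / t ^ m)"
    using \<open>(0, j) \<noteq> (j, k)\<close> by simp
  then show ?thesis
    unfolding arrival_def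
    using le_add_power_div[OF assms(1,2), of "\<omega> (0, j)"] le_add_power_div[OF assms(1,2), of "\<omega> (j, k)"]
    by linarith
qed

lemma expected_response_time_le:
  fixes t D :: real
  assumes "0 < l" and "0 < t" and "odd m" and "1 \<le> n" and "0 \<le> D"
  shows "(\<integral>\<^sup>+\<omega>. ennreal (response_time l D n \<omega>) \<partial>delay_space l n)
    \<le> ennreal (2 * t + D + 2 * small_delta l n * real n
                + card (msg_index n) * (fact (Suc m) / (l ^ Suc m * t ^ m)))"
proof -
  define c where "c = 2 * t + D + 2 * small_delta l n * real n"
  define X where "X i \<omega> = \<omega> i ^ Suc m / t ^ m" for i and \<omega> :: "nat \<times> nat \<Rightarrow> real"
  have "0 \<le> c"
    using assms small_delta_nonneg[of l n] by (simp add: c_def)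
  have "0 \<le> X i \<omega>" for i \<omega>
    unfolding X_def using assms by (intro divide_nonneg_pos zero_le_power_Suc_odd) auto
  interpret prob_space "delay_space l n"
    using assms(1) by (rule prob_space_delay_space)
  have "ennreal (response_time l D n \<omega>) \<le> ennreal c + (\<Sum>i\<in>msg_index n. ennreal (X i \<omega>))" for \<omega>
  proof -
    have "response_time l D n \<omega> \<le> 2 * t + (\<Sum>i\<in>msg_index n. X i \<omega>) + D + 2 * small_delta l n * real n"
      unfolding X_def by (rule response_time_le[OF assms(1,4,5) arrival_le_moment_sum[OF assms(2,3)]])
    then show ?thesis
      using \<open>0 \<le> c\<close> \<open>\<And>i \<omega>. 0 \<le> X i \<omega>\<close>
      by (simp add: c_def ennreal_leI sum_nonneg sum_ennreal flip: ennreal_plus)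
  qed
  then have "(\<integral>\<^sup>+\<omega>. ennreal (response_time l D n \<omega>) \<partial>delay_space l n)
      \<le> (\<integral>\<^sup>+\<omega>. ennreal c + (\<Sum>i\<in>msg_index n. ennreal (X i \<omega>)) \<partial>delay_space l n)"
    by (rule nn_integral_mono)
  also have "\<dots> = ennreal c + (\<Sum>i\<in>msg_index n. \<integral>\<^sup>+\<omega>. ennreal (X i \<omega>) \<partial>delay_space l n)"
    by (simp add: X_def nn_integral_add nn_integral_sum emeasure_space_1)
  also have "\<dots> = ennreal c + ennreal (card (msg_index n) * (fact (Suc m) / (l ^ Suc m * t ^ m)))"
    using assms
    by (simp add: X_def nn_integral_delay_power ennreal_of_nat_eq_real_of_nat
        flip: ennreal_mult' del: power_Suc fact_Suc)
  finally show ?thesis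
    using \<open>0 \<le> c\<close> assms by (simp add: c_def del: power_Suc fact_Suc flip: ennreal_plus)
qed

lemma one_minus_root_ge:
  assumes "0 < p" and "p < 1" and "1 \<le> n"
  shows "- ln p / (real n - ln p) \<le> 1 - root n p"
proof -
  define q where "q = - ln p"
  have "0 < q" and "0 < real n"
    using assms by (simp_all add: q_def)
  have "root n p = exp (- (q / real n))"
    using assms by (simp add: root_powr_inverse powr_def q_def)
  also have "\<dots> = 1 / exp (q / real n)"
    by (simp add: exp_minus field_simps)
  also have "\<dots> \<le> 1 / (1 + q / real n)"
    using \<open>0 < q\<close> \<open>0 < real n\<close> by (intro divide_left_mono exp_ge_add_one_self) (auto intro!: mult_pos_pos add_pos_pos)
  also have "\<dots> = 1 - q / (real n + q)"
    using \<open>0 < q\<close> \<open>0 < real n\<close> by (simp add: field_simps)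
  finally show ?thesis
    by (simp add: q_def)
qed

lemma Delta_p_nonneg:
  assumes "0 < p" and "p < 1" and "0 < l" and "1 \<le> n"
  shows "0 \<le> Delta_p p l n"
proof -
  have "ln (1 - root n p) \<le> 0"
    using assms by (simp add: real_root_lt_1_iff)
  then show ?thesis
    using assms(3) by (simp add: Delta_p_def divide_nonpos_pos)
qed

lemma Delta_p_le:
  assumes "0 < p" and "p < 1" and "0 < l" and "1 \<le> n"
  shows "l * Delta_p p l n \<le> ln (real n) + ln (1 - ln p) - ln (- ln p)"
proof -
  define q where "q = - ln p"
  have "0 < q" and "1 \<le> real n"
    using assms by (simp_all add: q_def)
  have "q / (real n + q) \<le> 1 - root n p"
    using one_minus_root_ge[OF assms(1,2,4)] by (simp add: q_def)
  then have "ln (q / (real n + q)) \<le> ln (1 - root n p)"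
    using \<open>0 < q\<close> \<open>1 \<le> real n\<close> by (intro ln_mono) simp_all
  moreover have "ln (q / (real n + q)) = ln q - ln (real n + q)"
    using \<open>0 < q\<close> \<open>1 \<le> real n\<close> by (simp add: ln_div)
  moreover have "ln (real n + q) \<le> ln (real n * (1 + q))"
    using \<open>0 < q\<close> \<open>1 \<le> real n\<close> by (intro ln_mono) (auto simp: field_simps)
  moreover have "ln (real n * (1 + q)) = ln (real n) + ln (1 + q)"
    using \<open>0 < q\<close> \<open>1 \<le> real n\<close> by (simp add: ln_mult)
  moreover have "l * Delta_p p l n = - ln (1 - root n p)"
    using assms(3) by (simp add: Delta_p_def)
  ultimately show ?thesis
    by (simp add: q_def)
qed

lemma card_msg_index_moment_le:
  fixes S l :: real
  assumes "0 < S" and "0 < l"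
  shows "card (msg_index n) * (fact 6 / (l ^ 6 * (S / l) ^ 5)) \<le> 720 * (real n + 2)\<^sup>2 / S ^ 5 / l"
proof -
  have "l ^ 6 * (S / l) ^ 5 = l * S ^ 5"
    using assms(2) by (simp add: power_divide eval_nat_numeral)
  then have "fact 6 / (l ^ 6 * (S / l) ^ 5) = 720 / (l * S ^ 5)"
    by (simp add: fact_numeral)
  moreover have "real (card (msg_index n)) \<le> (real n + 2)\<^sup>2"
    using card_msg_index_le[of n] by (metis of_nat_le_iff of_nat_add of_nat_numeral of_nat_power)
  then have "card (msg_index n) * (720 / (l * S ^ 5)) \<le> (real n + 2)\<^sup>2 * (720 / (l * S ^ 5))"
    using assms by (intro mult_right_mono) auto
  ultimately show ?thesis
    by (simp add: ac_simps)
qed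

definition response_time_bound :: "real \<Rightarrow> nat \<Rightarrow> real" where
  "response_time_bound p n = 2 * sqrt n + 2 * sqrt n * ln n + ln n + ln (1 - ln p) - ln (- ln p)
     + 720 * (real n + 2)\<^sup>2 / sqrt n ^ 5"

lemma response_time_bound_bigo: "response_time_bound p \<in> O(\<lambda>n. sqrt n * ln n)"
  unfolding response_time_bound_def by real_asymp

lemma expected_response_time_Delta_p_le:
  assumes "0 < p" and "p < 1" and "0 < l" and "1 \<le> n"
  shows "(\<integral>\<^sup>+\<omega>. ennreal (response_time l (Delta_p p l n) n \<omega>) \<partial>delay_space l n)
    \<le> ennreal (response_time_bound p n / l)"
proof -
  define S where "S = sqrt (real n)"
  have "0 < S" and "odd (5::nat)"
    using assms by (simp_all add: S_def)
  have "(\<integral>\<^sup>+\<omega>. ennreal (response_time l (Delta_p p l n) n \<omega>) \<partial>delay_space l n)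
      \<le> ennreal (2 * (S / l) + Delta_p p l n + 2 * small_delta l n * real n
                  + card (msg_index n) * (fact 6 / (l ^ 6 * (S / l) ^ 5)))"
    using expected_response_time_le[OF assms(3) divide_pos_pos[OF \<open>0 < S\<close> assms(3)] \<open>odd (5::nat)\<close> assms(4)
        Delta_p_nonneg[OF assms]]
    by (simp add: numeral_eq_Suc del: power_Suc fact_Suc)
  also have "\<dots> \<le> ennreal ((2 * S + 2 * S * ln n + ln n + ln (1 - ln p) - ln (- ln p)
                  + 720 * (real n + 2)\<^sup>2 / S ^ 5) / l)"
  proof (rule ennreal_leI)
    have "2 * small_delta l n * real n = 2 * (ln n / (l * S)) * S\<^sup>2"
      by (simp add: small_delta_def S_def)
    also have "\<dots> = 2 * S * ln n / l"
      using \<open>0 < S\<close> assms(3) by (simp add: power2_eq_square)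
    finally have "2 * small_delta l n * real n = 2 * S * ln n / l" .
    moreover have "Delta_p p l n \<le> (ln n + ln (1 - ln p) - ln (- ln p)) / l"
      using Delta_p_le[OF assms] assms(3) by (simp add: pos_le_divide_eq mult.commute)
    moreover have "card (msg_index n) * (fact 6 / (l ^ 6 * (S / l) ^ 5)) \<le> 720 * (real n + 2)\<^sup>2 / S ^ 5 / l"
      using \<open>0 < S\<close> assms(3) by (rule card_msg_index_moment_le)
    ultimately show "2 * (S / l) + Delta_p p l n + 2 * small_delta l n * real n
                  + card (msg_index n) * (fact 6 / (l ^ 6 * (S / l) ^ 5))
        \<le> (2 * S + 2 * S * ln n + ln n + ln (1 - ln p) - ln (- ln p) + 720 * (real n + 2)\<^sup>2 / S ^ 5) / l"
      by (simp add: add_divide_distrib diff_divide_distrib)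
  qed
  finally show ?thesis
    by (simp add: S_def response_time_bound_def)
qed

theorem theorem7:
  fixes p l :: real
  assumes "0 < p" and "p < 1" and "0 < l"
  shows "\<exists>C::real. \<forall>\<^sub>F n in sequentially.
           (\<integral>\<^sup>+ \<omega>. ennreal (response_time l (Delta_p p l n) n \<omega>) \<partial>delay_space l n)
             \<le> ennreal (C * (sqrt (real n) * ln (real n) / l))"
proof -
  obtain C where C: "\<forall>\<^sub>F n in sequentially. norm (response_time_bound p n) \<le> C * norm (sqrt n * ln n)"
    using response_time_bound_bigo by (blast elim: landau_o.bigE)
  have bounded: "(\<integral>\<^sup>+ \<omega>. ennreal (response_time l (Delta_p p l n) n \<omega>) \<partial>delay_space l n)
      \<le> ennreal (C * (sqrt (real n) * ln (real n) / l))"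
    if "norm (response_time_bound p n) \<le> C * norm (sqrt n * ln n)" and "1 \<le> n" for n
  proof -
    have "response_time_bound p n / l \<le> C * (sqrt (real n) * ln (real n) / l)"
      using that assms(3) by (simp add: divide_right_mono)
    then show ?thesis
      using expected_response_time_Delta_p_le[OF assms that(2)] by (meson ennreal_leI order_trans)
  qed
  have "\<forall>\<^sub>F n in sequentially. norm (response_time_bound p n) \<le> C * norm (sqrt n * ln n) \<and> 1 \<le> n"
    using C eventually_ge_at_top by (rule eventually_conj)
  then have "\<forall>\<^sub>F n in sequentially.
      (\<integral>\<^sup>+ \<omega>. ennreal (response_time l (Delta_p p l n) n \<omega>) \<partial>delay_space l n)
        \<le> ennreal (C * (sqrt (real n) * ln (real n) / l))"
    by (rule eventually_mono) (use bounded in blast)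
  then show ?thesis ..
qed

end
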